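(* Let $\alpha=(\alpha_0,\dots,\alpha_5)\in\mathbb{R}^6$ lie in the polytope $\hat P_{II}$ given by \[ -\tfrac12\le\alpha_0<0,\quad \alpha_0<\alpha_r\le1+\alpha_0\ (1\le r\le5),\quad 0\le\alpha_r+\alpha_s\le1\ (1\le r<s\le5), \] \[ 2\alpha_0=\sum_{r>0:\alpha_r+\alpha_0<0}(\alpha_r+\alpha_0),\qquad\sum_{r=0}^5\alpha_r=1. \] For $\zeta=(\zeta_1,\dots,\zeta_n)\in\mathbb{R}^n$ define \[ c(\zeta)=\frac12\sum_{i=1}^n\Big[2\zeta_i^2-2\alpha_0^2+\sum_{r\ge1:\alpha_r<-\alpha_0}(\alpha_r+\alpha_0)^2-\sum_{r\ge1:\alpha_r<-|\zeta_i|}(2\alpha_r^2+2\zeta_i^2)-\sum_{r\ge1:-|\zeta_i|\le\alpha_r<|\zeta_i|}(\alpha_r-|\zeta_i|)^2\Big], \] sums over $1\le r\le5$. Then for $\alpha_0\le\zeta_i\le-\alpha_0$ ($1\le i\le n$) we have $c(\zeta)\le0$, and equality holds only if either $\alpha_r+\alpha_s=0$ for some $1\le r<s\le 5$, or $\zeta_i=\pm\alpha_0$ for all $i$. *)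

theory Defs
  imports Complex_Main
begin

(* alpha = (alpha 0, ..., alpha 5); only indices 0..5 are used. *)
definition in_P_II :: "(nat \<Rightarrow> real) \<Rightarrow> bool" where
  "in_P_II \<alpha> \<longleftrightarrow>
     - (1/2) \<le> \<alpha> 0 \<and> \<alpha> 0 < 0 \<and>
     (\<forall>r\<in>{1..5}. \<alpha> 0 < \<alpha> r \<and> \<alpha> r \<le> 1 + \<alpha> 0) \<and>
     (\<forall>r\<in>{1..5}. \<forall>s\<in>{1..5}. r < s \<longrightarrow> 0 \<le> \<alpha> r + \<alpha> s \<and> \<alpha> r + \<alpha> s \<le> 1) \<and>
     2 * \<alpha> 0 = (\<Sum>r\<in>{r\<in>{1..5}. \<alpha> r + \<alpha> 0 < 0}. \<alpha> r + \<alpha> 0) \<and>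
     (\<Sum>r\<in>{0..5}. \<alpha> r) = 1"

definition c_fun :: "(nat \<Rightarrow> real) \<Rightarrow> nat \<Rightarrow> (nat \<Rightarrow> real) \<Rightarrow> real" where
  "c_fun \<alpha> n \<zeta> = (1/2) * (\<Sum>i\<in>{1..n}.
      2 * (\<zeta> i)\<^sup>2 - 2 * (\<alpha> 0)\<^sup>2
      + (\<Sum>r\<in>{r\<in>{1..5}. \<alpha> r < - \<alpha> 0}. (\<alpha> r + \<alpha> 0)\<^sup>2)
      - (\<Sum>r\<in>{r\<in>{1..5}. \<alpha> r < - \<bar>\<zeta> i\<bar>}. 2 * (\<alpha> r)\<^sup>2 + 2 * (\<zeta> i)\<^sup>2)
      - (\<Sum>r\<in>{r\<in>{1..5}. - \<bar>\<zeta> i\<bar> \<le> \<alpha> r \<and> \<alpha> r < \<bar>\<zeta> i\<bar>}. (\<alpha> r - \<bar>\<zeta> i\<bar>)\<^sup>2))"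

end

theory Submission imports Defs begin

text \<open>
  Put \<open>a = -\<alpha>\<^sub>0\<close> and \<open>t = \<bar>\<zeta>\<^sub>i\<bar> \<le> a\<close>. The \<open>i\<close>-th bracket of \<open>c(\<zeta>)\<close> is
  \<open>2t\<^sup>2 - 2a\<^sup>2 + \<Sum>\<^sub>r D(\<alpha>\<^sub>r)\<close> for an explicit piecewise quadratic \<open>D\<close>, and the constraint
  \<open>2\<alpha>\<^sub>0 = \<Sum>(\<alpha>\<^sub>r + \<alpha>\<^sub>0)\<close> says that the weights \<open>w(x) = max (a - x) 0\<close> satisfy
  \<open>\<Sum>\<^sub>r w(\<alpha>\<^sub>r) = 2a\<close>. Since \<open>\<alpha>\<^sub>r + \<alpha>\<^sub>s \<ge> 0\<close>, at most one \<open>\<alpha>\<^sub>r\<close> is negative, say \<open>-c\<close>,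
  and all others are \<open>\<ge> c\<close> (take \<open>c = 0\<close> if none is negative). For \<open>x \<ge> c\<close> one has
  \<open>(a - c) D(x) \<le> w(x) B(c)\<close>, the slack being a product of nonnegative factors, positive
  when \<open>c < x < a\<close>. Summing against the weights gives \<open>\<Sum> D \<le> 2 B(0) = 2(a\<^sup>2 - t\<^sup>2)\<close>,
  resp. \<open>\<Sum> D \<le> D(-c) + B(c) = 2(a\<^sup>2 - t\<^sup>2)\<close>. If equality holds with \<open>t < a\<close>, no \<open>\<alpha>\<^sub>r\<close>
  lies strictly between \<open>c\<close> and \<open>a\<close>; the weight identity then forces two \<open>\<alpha>\<^sub>r\<close> to vanish,
  resp. one to equal \<open>c\<close>, and either way two of them sum to zero.
\<close>

text \<open>\<open>shortfall a\<close>, \<open>bracket_contrib a t\<close> and \<open>contrib_bound a t\<close> are \<open>w\<close>, \<open>D\<close> and \<open>B\<close> above.\<close>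

definition shortfall :: "real \<Rightarrow> real \<Rightarrow> real" where
  "shortfall a x = (if x < a then a - x else 0)"

definition bracket_contrib :: "real \<Rightarrow> real \<Rightarrow> real \<Rightarrow> real" where
  "bracket_contrib a t x = (if x < a then (x - a)\<^sup>2 else 0)
     - (if x < - t then 2 * x\<^sup>2 + 2 * t\<^sup>2 else 0)
     - (if - t \<le> x \<and> x < t then (x - t)\<^sup>2 else 0)"

definition contrib_bound :: "real \<Rightarrow> real \<Rightarrow> real \<Rightarrow> real" where
  "contrib_bound a t c = (if c \<le> t then (a - t) * (a + t - 2 * c) else (a - c)\<^sup>2)"

lemma bracket_contrib_slack:
  fixes a t c x :: real
  assumes "0 \<le> c" "0 \<le> t" "c \<le> x" "x < a"
  shows "shortfall a x * contrib_bound a t c - (a - c) * bracket_contrib a t x =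
    (if t < c then (a - x) * (a - c) * (x - c)
     else if x < t then (x - c) * (a - t)\<^sup>2
     else (a - x) * ((a - c) * (x - c) - (t - c)\<^sup>2))"
  using assms
  by (auto simp: shortfall_def bracket_contrib_def contrib_bound_def power2_eq_square algebra_simps)

lemma bracket_contrib_le:
  fixes a t c x :: real
  assumes "0 \<le> c" "0 \<le> t" "t \<le> a" "c \<le> x"
  shows "(a - c) * bracket_contrib a t x \<le> shortfall a x * contrib_bound a t c"
proof (cases "x < a")
  case True
  have "(t - c)\<^sup>2 \<le> (x - c)\<^sup>2" if "c \<le> t" "t \<le> x"
    using that by (simp add: power_mono)
  moreover have "(x - c)\<^sup>2 \<le> (a - c) * (x - c)"
    using assms True by (simp add: power2_eq_square mult_right_mono)
  ultimately show ?thesis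
    using bracket_contrib_slack[OF assms(1,2,4) True] assms True by (smt (verit) mult_nonneg_nonneg zero_le_power2)
next
  case False
  then show ?thesis using assms by (simp add: shortfall_def bracket_contrib_def)
qed

lemma bracket_contrib_less:
  fixes a t c x :: real
  assumes "0 \<le> c" "0 \<le> t" "t < a" "c < x" "x < a"
  shows "(a - c) * bracket_contrib a t x < shortfall a x * contrib_bound a t c"
proof -
  have "(t - c)\<^sup>2 \<le> (x - c)\<^sup>2" if "c \<le> t" "t \<le> x"
    using that by (simp add: power_mono)
  moreover have "(x - c)\<^sup>2 < (a - c) * (x - c)"
    using assms by (simp add: power2_eq_square)
  moreover have "0 < (x - c) * (a - t)\<^sup>2" "0 < (a - x) * (a - c) * (x - c)"
    using assms by simp_all
  ultimately show ?thesis
    using bracket_contrib_slack[of c t x a] assms by (smt (verit) mult_pos_pos)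
qed

lemma bracket_contrib_neg:
  fixes a t c :: real
  assumes "0 < c" "c < a" "0 \<le> t" "t \<le> a"
  shows "bracket_contrib a t (- c) + contrib_bound a t c = 2 * (a\<^sup>2 - t\<^sup>2)"
  using assms by (auto simp: bracket_contrib_def contrib_bound_def power2_eq_square algebra_simps)

lemma sum_bracket_contrib_le_bound:
  fixes b :: "'i \<Rightarrow> real"
  assumes "finite J" "0 \<le> c" "c < a" "0 \<le> t" "t \<le> a" "\<forall>r\<in>J. c \<le> b r"
    and "(\<Sum>r\<in>J. shortfall a (b r)) = k * (a - c)"
  shows "(\<Sum>r\<in>J. bracket_contrib a t (b r)) \<le> k * contrib_bound a t c"
    and "t < a \<Longrightarrow> \<exists>r\<in>J. c < b r \<and> b r < a \<Longrightarrow>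
      (\<Sum>r\<in>J. bracket_contrib a t (b r)) < k * contrib_bound a t c"
proof -
  have ac: "0 < a - c" using assms by simp
  have rhs: "(\<Sum>r\<in>J. shortfall a (b r) * contrib_bound a t c) = (a - c) * (k * contrib_bound a t c)"
    by (simp add: assms(7) flip: sum_distrib_right)
  have "(a - c) * (\<Sum>r\<in>J. bracket_contrib a t (b r)) \<le> (\<Sum>r\<in>J. shortfall a (b r) * contrib_bound a t c)"
    unfolding sum_distrib_left using assms bracket_contrib_le by (intro sum_mono) blast
  with ac rhs show "(\<Sum>r\<in>J. bracket_contrib a t (b r)) \<le> k * contrib_bound a t c"
    by simp
  assume "t < a" "\<exists>r\<in>J. c < b r \<and> b r < a"
  then have "(a - c) * (\<Sum>r\<in>J. bracket_contrib a t (b r)) < (\<Sum>r\<in>J. shortfall a (b r) * contrib_bound a t c)"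
    unfolding sum_distrib_left using assms bracket_contrib_le bracket_contrib_less
    by (intro sum_strict_mono_ex1) blast+
  with ac rhs show "(\<Sum>r\<in>J. bracket_contrib a t (b r)) < k * contrib_bound a t c"
    by simp
qed

lemma sum_shortfall_no_middle:
  fixes b :: "'i \<Rightarrow> real"
  assumes "finite J" "c \<le> a" "\<forall>r\<in>J. c \<le> b r" "\<forall>r\<in>J. \<not> (c < b r \<and> b r < a)"
  shows "(\<Sum>r\<in>J. shortfall a (b r)) = real (card {r\<in>J. b r = c}) * (a - c)"
proof -
  have "(\<Sum>r\<in>J. shortfall a (b r)) = (\<Sum>r\<in>J. if b r = c then a - c else 0)"
    using assms(2-4) by (intro sum.cong) (fastforce simp: shortfall_def)+
  then show ?thesis
    using assms(1) by (simp add: sum.inter_filter[symmetric])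
qed

lemma sum_bracket_contrib_le_nonneg:
  fixes b :: "'i \<Rightarrow> real"
  assumes "finite I" "0 < a" "0 \<le> t" "t \<le> a" "\<forall>r\<in>I. 0 \<le> b r"
    and "(\<Sum>r\<in>I. shortfall a (b r)) = 2 * a"
  shows "(\<Sum>r\<in>I. bracket_contrib a t (b r)) \<le> 2 * (a\<^sup>2 - t\<^sup>2)"
    and "t < a \<Longrightarrow> \<not> (\<exists>r\<in>I. \<exists>s\<in>I. r \<noteq> s \<and> b r + b s = 0) \<Longrightarrow>
      (\<Sum>r\<in>I. bracket_contrib a t (b r)) < 2 * (a\<^sup>2 - t\<^sup>2)"
proof -
  have sw: "(\<Sum>r\<in>I. shortfall a (b r)) = 2 * (a - 0)" using assms(6) by simp
  have bound: "2 * contrib_bound a t 0 = 2 * (a\<^sup>2 - t\<^sup>2)"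
    using assms(3) by (simp add: contrib_bound_def power2_eq_square algebra_simps)
  show "(\<Sum>r\<in>I. bracket_contrib a t (b r)) \<le> 2 * (a\<^sup>2 - t\<^sup>2)"
    using sum_bracket_contrib_le_bound(1)[OF assms(1) order_refl assms(2-5) sw] bound by simp
  assume ta: "t < a" and no_pair: "\<not> (\<exists>r\<in>I. \<exists>s\<in>I. r \<noteq> s \<and> b r + b s = 0)"
  have "\<exists>r\<in>I. 0 < b r \<and> b r < a"
  proof (rule ccontr)
    assume "\<not> ?thesis"
    then have "real (card {r\<in>I. b r = 0}) * a = 2 * a"
      using sum_shortfall_no_middle[of I 0 a b] assms by simp
    then have "card {r\<in>I. b r = 0} = 2" using assms(2) by simp
    then obtain r s where "{r\<in>I. b r = 0} = {r, s}" "r \<noteq> s" by (auto simp: card_2_iff)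
    then have "r \<in> I" "s \<in> I" "b r = 0" "b s = 0" "r \<noteq> s" by (auto simp: set_eq_iff)
    then show False using no_pair by force
  qed
  then show "(\<Sum>r\<in>I. bracket_contrib a t (b r)) < 2 * (a\<^sup>2 - t\<^sup>2)"
    using sum_bracket_contrib_le_bound(2)[OF assms(1) order_refl assms(2-5) sw ta] bound by simp
qed

lemma sum_bracket_contrib_le_one_neg:
  fixes b :: "'i \<Rightarrow> real"
  assumes "finite I" "0 \<le> t" "t \<le> a" "r0 \<in> I" "b r0 < 0" "- a < b r0"
    and "\<forall>r\<in>I - {r0}. 0 \<le> b r + b r0"
    and "(\<Sum>r\<in>I. shortfall a (b r)) = 2 * a"
  shows "(\<Sum>r\<in>I. bracket_contrib a t (b r)) \<le> 2 * (a\<^sup>2 - t\<^sup>2)"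
    and "t < a \<Longrightarrow> \<not> (\<exists>r\<in>I. \<exists>s\<in>I. r \<noteq> s \<and> b r + b s = 0) \<Longrightarrow>
      (\<Sum>r\<in>I. bracket_contrib a t (b r)) < 2 * (a\<^sup>2 - t\<^sup>2)"
proof -
  define c where "c = - b r0"
  define J where "J = I - {r0}"
  have c: "0 < c" "c < a" "b r0 = - c" using assms(5,6) by (auto simp: c_def)
  have fin: "finite J" and lower: "\<forall>r\<in>J. c \<le> b r"
    using assms(1,7) by (force simp: J_def c_def)+
  have sum_remove_r0: "(\<Sum>r\<in>I. f (b r)) = f (- c) + (\<Sum>r\<in>J. f (b r))" for f
    using sum.remove[OF assms(1,4), of "\<lambda>r. f (b r)"] c by (simp add: J_def)
  have sw: "(\<Sum>r\<in>J. shortfall a (b r)) = 1 * (a - c)"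
    using sum_remove_r0[of "shortfall a"] assms(8) c by (simp add: shortfall_def)
  have total: "bracket_contrib a t (- c) + 1 * contrib_bound a t c = 2 * (a\<^sup>2 - t\<^sup>2)"
    using bracket_contrib_neg[OF c(1,2) assms(2,3)] by simp
  show "(\<Sum>r\<in>I. bracket_contrib a t (b r)) \<le> 2 * (a\<^sup>2 - t\<^sup>2)"
    using sum_bracket_contrib_le_bound(1)[OF fin less_imp_le[OF c(1)] c(2) assms(2,3) lower sw] c total
      sum_remove_r0[of "bracket_contrib a t"] by simp
  assume ta: "t < a" and no_pair: "\<not> (\<exists>r\<in>I. \<exists>s\<in>I. r \<noteq> s \<and> b r + b s = 0)"
  have "\<exists>r\<in>J. c < b r \<and> b r < a"
  proof (rule ccontr)
    assume "\<not> ?thesis"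
    then have "real (card {r\<in>J. b r = c}) * (a - c) = 1 * (a - c)"
      using sum_shortfall_no_middle[of J c a b] fin lower c sw by simp
    then have "card {r\<in>J. b r = c} = 1" using c by simp
    then obtain r where "r \<in> J" "b r = c" by (auto simp: card_1_singleton_iff)
    then have "r \<in> I" "r \<noteq> r0" "b r + b r0 = 0" using c by (auto simp: J_def)
    then show False using no_pair assms(4) by blast
  qed
  then show "(\<Sum>r\<in>I. bracket_contrib a t (b r)) < 2 * (a\<^sup>2 - t\<^sup>2)"
    using sum_bracket_contrib_le_bound(2)[OF fin less_imp_le[OF c(1)] c(2) assms(2,3) lower sw ta] c total
      sum_remove_r0[of "bracket_contrib a t"] by simp
qed

lemma sum_bracket_contrib_le:
  fixes b :: "'i \<Rightarrow> real"
  assumes "finite I" "0 < a" "0 \<le> t" "t \<le> a" "\<forall>r\<in>I. - a < b r"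
    and "\<forall>r\<in>I. \<forall>s\<in>I. r \<noteq> s \<longrightarrow> 0 \<le> b r + b s"
    and "(\<Sum>r\<in>I. shortfall a (b r)) = 2 * a"
  shows "(\<Sum>r\<in>I. bracket_contrib a t (b r)) \<le> 2 * (a\<^sup>2 - t\<^sup>2)"
    and "t < a \<Longrightarrow> \<not> (\<exists>r\<in>I. \<exists>s\<in>I. r \<noteq> s \<and> b r + b s = 0) \<Longrightarrow>
      (\<Sum>r\<in>I. bracket_contrib a t (b r)) < 2 * (a\<^sup>2 - t\<^sup>2)"
proof -
  have "(\<Sum>r\<in>I. bracket_contrib a t (b r)) \<le> 2 * (a\<^sup>2 - t\<^sup>2) \<and>
    (t < a \<longrightarrow> \<not> (\<exists>r\<in>I. \<exists>s\<in>I. r \<noteq> s \<and> b r + b s = 0) \<longrightarrow>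
      (\<Sum>r\<in>I. bracket_contrib a t (b r)) < 2 * (a\<^sup>2 - t\<^sup>2))"
  proof (cases "\<forall>r\<in>I. 0 \<le> b r")
    case True
    then show ?thesis using sum_bracket_contrib_le_nonneg[OF assms(1-4) True assms(7)] by blast
  next
    case False
    then obtain r0 where r0: "r0 \<in> I" "b r0 < 0" by force
    moreover have "\<forall>r\<in>I - {r0}. 0 \<le> b r + b r0" using assms(6) r0(1) by blast
    ultimately show ?thesis
      using sum_bracket_contrib_le_one_neg[OF assms(1,3,4) r0 _ _ assms(7)] assms(5) by blast
  qed
  then show "(\<Sum>r\<in>I. bracket_contrib a t (b r)) \<le> 2 * (a\<^sup>2 - t\<^sup>2)"
    and "t < a \<Longrightarrow> \<not> (\<exists>r\<in>I. \<exists>s\<in>I. r \<noteq> s \<and> b r + b s = 0) \<Longrightarrow>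
      (\<Sum>r\<in>I. bracket_contrib a t (b r)) < 2 * (a\<^sup>2 - t\<^sup>2)"
    by blast+
qed

definition c_bracket :: "(nat \<Rightarrow> real) \<Rightarrow> real \<Rightarrow> real" where
  "c_bracket \<alpha> z = 2 * z\<^sup>2 - 2 * (\<alpha> 0)\<^sup>2
      + (\<Sum>r\<in>{r\<in>{1..5}. \<alpha> r < - \<alpha> 0}. (\<alpha> r + \<alpha> 0)\<^sup>2)
      - (\<Sum>r\<in>{r\<in>{1..5}. \<alpha> r < - \<bar>z\<bar>}. 2 * (\<alpha> r)\<^sup>2 + 2 * z\<^sup>2)
      - (\<Sum>r\<in>{r\<in>{1..5}. - \<bar>z\<bar> \<le> \<alpha> r \<and> \<alpha> r < \<bar>z\<bar>}. (\<alpha> r - \<bar>z\<bar>)\<^sup>2)"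

lemma c_fun_eq_sum_c_bracket: "c_fun \<alpha> n \<zeta> = (1/2) * (\<Sum>i\<in>{1..n}. c_bracket \<alpha> (\<zeta> i))"
  by (simp add: c_fun_def c_bracket_def)

lemma c_bracket_eq_sum_bracket_contrib:
  "c_bracket \<alpha> z = 2 * \<bar>z\<bar>\<^sup>2 - 2 * (- \<alpha> 0)\<^sup>2 + (\<Sum>r\<in>{1..5}. bracket_contrib (- \<alpha> 0) \<bar>z\<bar> (\<alpha> r))"
  unfolding c_bracket_def bracket_contrib_def sum_subtractf sum.inter_filter[OF finite_atLeastAtMost, symmetric]
  by (simp add: power2_eq_square algebra_simps)

lemma in_P_II_sum_shortfall:
  assumes "in_P_II \<alpha>"
  shows "(\<Sum>r\<in>{1..5}. shortfall (- \<alpha> 0) (\<alpha> r)) = 2 * - \<alpha> 0"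
proof -
  have "(\<Sum>r\<in>{1..5}. shortfall (- \<alpha> 0) (\<alpha> r))
      = - (\<Sum>r\<in>{1..5}. if \<alpha> r + \<alpha> 0 < 0 then \<alpha> r + \<alpha> 0 else 0)"
    unfolding sum_negf[symmetric] by (intro sum.cong) (auto simp: shortfall_def)
  also have "\<dots> = 2 * - \<alpha> 0"
    using assms by (simp add: in_P_II_def sum.inter_filter[symmetric])
  finally show ?thesis .
qed

lemma in_P_II_pairwise_nonneg:
  assumes "in_P_II \<alpha>"
  shows "\<forall>r\<in>{1..5}. \<forall>s\<in>{1..5}. r \<noteq> s \<longrightarrow> 0 \<le> \<alpha> r + \<alpha> s"
  using assms unfolding in_P_II_def by (metis add.commute linorder_neqE_nat)

lemma c_bracket_le:
  assumes "in_P_II \<alpha>" "\<alpha> 0 \<le> z" "z \<le> - \<alpha> 0"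
  shows "c_bracket \<alpha> z \<le> 0"
    and "\<bar>z\<bar> < - \<alpha> 0 \<Longrightarrow> \<not> (\<exists>r\<in>{1..5}. \<exists>s\<in>{1..5}. r < s \<and> \<alpha> r + \<alpha> s = 0) \<Longrightarrow>
      c_bracket \<alpha> z < 0"
proof -
  have a: "0 < - \<alpha> 0" "\<forall>r\<in>{1..5}. - (- \<alpha> 0) < \<alpha> r" and t: "\<bar>z\<bar> \<le> - \<alpha> 0"
    using assms by (auto simp: in_P_II_def)
  note sum_le = sum_bracket_contrib_le[OF finite_atLeastAtMost a(1) abs_ge_zero t a(2)
      in_P_II_pairwise_nonneg[OF assms(1)] in_P_II_sum_shortfall[OF assms(1)]]
  show "c_bracket \<alpha> z \<le> 0"
    using sum_le(1) by (simp add: c_bracket_eq_sum_bracket_contrib)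
  assume "\<bar>z\<bar> < - \<alpha> 0" "\<not> (\<exists>r\<in>{1..5}. \<exists>s\<in>{1..5}. r < s \<and> \<alpha> r + \<alpha> s = 0)"
  moreover have "\<not> (\<exists>r\<in>{1..5}. \<exists>s\<in>{1..5}. r \<noteq> s \<and> \<alpha> r + \<alpha> s = 0)"
    using calculation(2) by (metis add.commute linorder_neqE_nat)
  ultimately show "c_bracket \<alpha> z < 0"
    using sum_le(2) by (simp add: c_bracket_eq_sum_bracket_contrib)
qed

theorem lemmaA5:
  fixes \<alpha> \<zeta> :: "nat \<Rightarrow> real" and n :: nat
  assumes "in_P_II \<alpha>"
    and "\<forall>i\<in>{1..n}. \<alpha> 0 \<le> \<zeta> i \<and> \<zeta> i \<le> - \<alpha> 0"
  shows "c_fun \<alpha> n \<zeta> \<le> 0 \<and>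
    (c_fun \<alpha> n \<zeta> = 0 \<longrightarrow>
      (\<exists>r\<in>{1..5}. \<exists>s\<in>{1..5}. r < s \<and> \<alpha> r + \<alpha> s = 0) \<or>
      (\<forall>i\<in>{1..n}. \<zeta> i = \<alpha> 0 \<or> \<zeta> i = - \<alpha> 0))"
proof -
  have le: "\<forall>i\<in>{1..n}. c_bracket \<alpha> (\<zeta> i) \<le> 0"
    using c_bracket_le(1)[OF assms(1)] assms(2) by blast
  have "c_fun \<alpha> n \<zeta> < 0"
    if no_pair: "\<not> (\<exists>r\<in>{1..5}. \<exists>s\<in>{1..5}. r < s \<and> \<alpha> r + \<alpha> s = 0)"
      and i: "i \<in> {1..n}" "\<zeta> i \<noteq> \<alpha> 0" "\<zeta> i \<noteq> - \<alpha> 0" for i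
  proof -
    have "\<alpha> 0 \<le> \<zeta> i" "\<zeta> i \<le> - \<alpha> 0" using i(1) assms(2) by auto
    with i(2,3) have "\<bar>\<zeta> i\<bar> < - \<alpha> 0" by linarith
    then have "c_bracket \<alpha> (\<zeta> i) < 0"
      using c_bracket_le(2)[OF assms(1)] assms(2) i(1) no_pair by blast
    then have "(\<Sum>i\<in>{1..n}. c_bracket \<alpha> (\<zeta> i)) < (\<Sum>i\<in>{1..n}. 0)"
      using le i(1) by (intro sum_strict_mono_ex1) auto
    then show ?thesis by (simp add: c_fun_eq_sum_c_bracket)
  qed
  moreover have "c_fun \<alpha> n \<zeta> \<le> 0"
    using le sum_nonpos[of "{1..n}" "\<lambda>i. c_bracket \<alpha> (\<zeta> i)"] by (simp add: c_fun_eq_sum_c_bracket)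
  ultimately show ?thesis by (metis less_irrefl)
qed

end
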